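(* Let $M$ be a matroid, $\psi\colon E(M)\to\Gamma$ a labeling to an abelian group, and $F\subseteq\Gamma$ with $|F|=2$. If $M$ has at least one $F$-avoiding basis, then for every basis $B$ of $M$ there exists an $F$-avoiding basis $B^*$ with $|B\setminus B^*|\le2$.
   Context: $\psi(S):=\sum_{x\in S}\psi(x)$; a basis $B$ is $F$-avoiding if $\psi(B)\notin F$. *)

theory Defs
  imports Main
begin

definition matroid :: "'a set \<Rightarrow> ('a set \<Rightarrow> bool) \<Rightarrow> bool" where
  "matroid E indep \<longleftrightarrow>
     finite E \<and>
     (\<forall>X. indep X \<longrightarrow> X \<subseteq> E) \<and>
     indep {} \<and>
     (\<forall>X Y. indep X \<and> Y \<subseteq> X \<longrightarrow> indep Y) \<and>
     (\<forall>X Y. indep X \<and> indep Y \<and> card X < card Y \<longrightarrow>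
        (\<exists>y \<in> Y - X. indep (insert y X)))"

definition basis :: "('a set \<Rightarrow> bool) \<Rightarrow> 'a set \<Rightarrow> bool" where
  "basis indep B \<longleftrightarrow> indep B \<and> (\<forall>X. indep X \<and> B \<subseteq> X \<longrightarrow> X = B)"

definition F_avoiding :: "('a \<Rightarrow> 'g::comm_monoid_add) \<Rightarrow> 'g set \<Rightarrow> 'a set \<Rightarrow> bool" where
  "F_avoiding \<psi> F B \<longleftrightarrow> (\<Sum>x\<in>B. \<psi> x) \<notin> F"

end

theory Submission
  imports Defs
begin

text \<open>Measure the distance between bases \<open>B\<close>, \<open>D\<close> by \<open>card (B - D)\<close>, and suppose every basis
  within distance 2 of \<open>B\<close> has its sum in \<open>F = {\<psi>(B), \<psi>(B) + d}\<close>; we show every basis does.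
  Larger distances reduce to distance 3 by moving \<open>B\<close> one exchange towards \<open>D\<close>. At distance 3,
  if \<open>\<psi>(D) \<notin> F\<close>, every pair \<open>r \<in> B - D\<close>, \<open>c \<in> D - B\<close> exchangeable in both directions has
  \<open>\<psi>(B - r + c) \<in> F\<close> and \<open>\<psi>(D - c + r) \<in> F\<close>, which forces \<open>\<psi> c - \<psi> r = d\<close> and
  \<open>\<psi>(D) = \<psi>(B) + 2d\<close>. A second exchange, made after the first, yields \<open>3d = 0\<close> and a pair with
  difference \<open>-d\<close>; by symmetric exchange the \<open>3 \<times> 3\<close> table of differences \<open>\<psi> c - \<psi> r\<close> has
  \<open>d\<close> in every row and column, which is incompatible with its diagonal \<open>d, -d, -d\<close>.\<close>

lemma matroid_indep_subset: "matroid E indep \<Longrightarrow> indep X \<Longrightarrow> Y \<subseteq> X \<Longrightarrow> indep Y"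
  unfolding matroid_def by blast

lemma matroid_augment:
  "matroid E indep \<Longrightarrow> indep X \<Longrightarrow> indep Y \<Longrightarrow> card X < card Y \<Longrightarrow> \<exists>y\<in>Y - X. indep (insert y X)"
  unfolding matroid_def by blast

lemma matroid_indep_finite: "matroid E indep \<Longrightarrow> indep X \<Longrightarrow> finite X"
  unfolding matroid_def by (meson finite_subset)

lemma matroid_augment_to_card:
  assumes M: "matroid E indep" and "indep A" "indep Y" "card A \<le> card Y"
  shows "\<exists>K. indep K \<and> A \<subseteq> K \<and> K \<subseteq> A \<union> Y \<and> card K = card Y"
  using assms(2-)
proof (induction "card Y - card A" arbitrary: A)
  case 0
  then show ?case by auto
next
  case (Suc n)
  then have "card A < card Y" by simp
  then obtain y where y: "y \<in> Y - A" "indep (insert y A)"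
    using matroid_augment[OF M Suc.prems(1,2)] by blast
  have "card (insert y A) = Suc (card A)"
    using y matroid_indep_finite[OF M Suc.prems(1)] by simp
  then have "n = card Y - card (insert y A)" "card (insert y A) \<le> card Y"
    using Suc.hyps(2) \<open>card A < card Y\<close> by simp_all
  then obtain K where "indep K" "insert y A \<subseteq> K" "K \<subseteq> insert y A \<union> Y" "card K = card Y"
    using Suc.hyps(1) Suc.prems(2) y(2) by blast
  then show ?case using y by blast
qed

lemma basis_card_le:
  assumes M: "matroid E indep" and B: "basis indep B" and X: "indep X"
  shows "card X \<le> card B"
proof (rule ccontr)
  assume "\<not> card X \<le> card B"
  then obtain y where "y \<in> X - B" "indep (insert y B)"
    using matroid_augment[OF M _ X, of B] B unfolding basis_def by auto
  then show False using B unfolding basis_def by blast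
qed

lemma basis_iff_indep_card:
  assumes M: "matroid E indep" and B: "basis indep B"
  shows "basis indep X \<longleftrightarrow> indep X \<and> card X = card B"
proof
  assume "basis indep X"
  then show "indep X \<and> card X = card B"
    using basis_card_le[OF M B] basis_card_le[OF M \<open>basis indep X\<close>] B
    unfolding basis_def by (simp add: le_antisym)
next
  assume X: "indep X \<and> card X = card B"
  have "Z = X" if "indep Z" "X \<subseteq> Z" for Z
    using card_seteq[OF matroid_indep_finite[OF M \<open>indep Z\<close>] \<open>X \<subseteq> Z\<close>]
      basis_card_le[OF M B \<open>indep Z\<close>] X by simp
  with X show "basis indep X" unfolding basis_def by blast
qed

lemma matroid_minimal_dependent_extension:
  assumes M: "matroid E indep" and "indep Y" and "\<not> indep (insert e Y)"
  obtains C where "C \<subseteq> Y" "\<not> indep (insert e C)" "\<And>y. y \<in> C \<Longrightarrow> indep (insert e (C - {y}))"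
proof -
  let ?S = "{C. C \<subseteq> Y \<and> \<not> indep (insert e C)}"
  have "finite ?S" using matroid_indep_finite[OF M \<open>indep Y\<close>] by simp
  moreover have "?S \<noteq> {}" using assms(3) by blast
  ultimately obtain C where C: "C \<in> ?S" and min: "\<And>C'. C' \<in> ?S \<Longrightarrow> C' \<le> C \<Longrightarrow> C = C'"
    using finite_has_minimal by meson
  have "indep (insert e (C - {y}))" if "y \<in> C" for y
    using min[of "C - {y}"] C that by blast
  with C that show ?thesis by blast
qed

lemma matroid_circuit_exchange:
  assumes M: "matroid E indep" and Y: "indep Y" "e \<notin> Y"
    and C: "C \<subseteq> Y" "\<And>y. y \<in> C \<Longrightarrow> indep (insert e (C - {y}))" "\<not> indep (insert e C)"
    and y: "y \<in> C"
  shows "indep (insert e (Y - {y}))"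
proof -
  have fY: "finite Y" using matroid_indep_finite[OF M Y(1)] .
  have fC: "finite C" using finite_subset[OF C(1) fY] .
  have "e \<notin> C" using C(1) Y(2) by blast
  then have "card (insert e (C - {y})) = card C"
    using fC y card_Suc_Diff1[OF fC y] by simp
  then have "card (insert e (C - {y})) \<le> card Y"
    using card_mono[OF fY C(1)] by simp
  then obtain K where K: "indep K" "insert e (C - {y}) \<subseteq> K"
      "K \<subseteq> insert e (C - {y}) \<union> Y" "card K = card Y"
    using matroid_augment_to_card[OF M C(2)[OF y] Y(1)] by blast
  have "y \<notin> K"
  proof
    assume "y \<in> K"
    then have "insert e C \<subseteq> K" using K(2) by blast
    then show False using C(3) matroid_indep_subset[OF M K(1)] by blast
  qed
  then have "K \<subseteq> insert e (Y - {y})" using K(3) C(1) by blast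
  moreover have "card (insert e (Y - {y})) = card Y"
    using fY Y(2) y C(1) card_Suc_Diff1[OF fY, of y] by auto
  ultimately have "K = insert e (Y - {y})"
    using card_seteq[of "insert e (Y - {y})" K] fY K(4) by simp
  then show ?thesis using K(1) by simp
qed

lemma matroid_replace_element:
  assumes M: "matroid E indep" and X: "indep X" "e \<in> X"
    and C: "indep C" "\<not> indep (insert e C)" "card C \<le> card X"
  shows "\<exists>y\<in>C - X. indep (insert y (X - {e}))"
proof -
  obtain K where K: "indep K" "C \<subseteq> K" "K \<subseteq> C \<union> X" "card K = card X"
    using matroid_augment_to_card[OF M C(1) X(1) C(3)] by blast
  have "e \<notin> K"
  proof
    assume "e \<in> K"
    then have "insert e C \<subseteq> K" using K(2) by blast
    then show False using C(2) matroid_indep_subset[OF M K(1)] by blast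
  qed
  have "card (X - {e}) < card K"
    using K(4) card_Diff1_less[OF matroid_indep_finite[OF M X(1)] X(2)] by simp
  then obtain y where "y \<in> K - (X - {e})" "indep (insert y (X - {e}))"
    using matroid_augment[OF M matroid_indep_subset[OF M X(1)] K(1)] by blast
  moreover from this have "y \<in> C - X" using K(3) \<open>e \<notin> K\<close> by auto
  ultimately show ?thesis by blast
qed

lemma basis_symmetric_exchange:
  assumes M: "matroid E indep" and X: "basis indep X" and Y: "basis indep Y"
    and e: "e \<in> X" "e \<notin> Y"
  obtains y where "y \<in> Y - X" "basis indep (insert y (X - {e}))" "basis indep (insert e (Y - {y}))"
proof -
  have iX: "indep X" and iY: "indep Y" using X Y unfolding basis_def by auto
  have fX: "finite X" and fY: "finite Y" using matroid_indep_finite[OF M] iX iY by auto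
  have cXY: "card Y = card X" using basis_iff_indep_card[OF M X] Y by simp
  have "\<not> indep (insert e Y)" using Y e unfolding basis_def by blast
  then obtain C where C: "C \<subseteq> Y" "\<not> indep (insert e C)"
    and C_min: "\<And>y. y \<in> C \<Longrightarrow> indep (insert e (C - {y}))"
    using matroid_minimal_dependent_extension[OF M iY] by blast
  have "card C \<le> card X" using card_mono[OF fY C(1)] cXY by simp
  then obtain y where y: "y \<in> C - X" "indep (insert y (X - {e}))"
    using matroid_replace_element[OF M iX e(1) matroid_indep_subset[OF M iY C(1)] C(2)] by blast
  have "indep (insert e (Y - {y}))"
    using matroid_circuit_exchange[OF M iY e(2) C(1) C_min C(2)] y by blast
  moreover have "card (insert y (X - {e})) = card X" "card (insert e (Y - {y})) = card X"
    using y C(1) e card_Suc_Diff1[OF fX e(1)] card_Suc_Diff1[OF fY, of y] fX fY cXY by auto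
  ultimately show ?thesis
    using that y C(1) basis_iff_indep_card[OF M X] by blast
qed

lemma card_eq_3_third_element:
  assumes "card S = 3" "a \<in> S" "b \<in> S" "a \<noteq> b"
  obtains c where "S = {a, b, c}" "c \<noteq> a" "c \<noteq> b"
proof -
  have "finite S" using assms(1) by (intro card_ge_0_finite) simp
  then have "card (S - {a, b}) = 1" using assms by (simp add: card_Diff_subset)
  then obtain c where "S - {a, b} = {c}" by (rule card_1_singletonE)
  with assms(2-) that show ?thesis by blast
qed

lemma sum_exchange:
  fixes \<psi> :: "'a \<Rightarrow> 'g::ab_group_add"
  assumes "finite B" "r \<in> B" "c \<notin> B"
  shows "sum \<psi> (insert c (B - {r})) = sum \<psi> B + (\<psi> c - \<psi> r)"
  using assms by (simp add: sum_diff1 algebra_simps)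

lemma sum_diff_eq_sum_set_diffs:
  fixes \<psi> :: "'a \<Rightarrow> 'g::ab_group_add"
  assumes "finite B" "finite D"
  shows "sum \<psi> D - sum \<psi> B = sum \<psi> (D - B) - sum \<psi> (B - D)"
  using sum.Int_Diff[OF assms(2), of \<psi> B] sum.Int_Diff[OF assms(1), of \<psi> D]
  by (simp add: Int_commute)

text \<open>\<open>a\<^sub>i = \<psi> r\<^sub>i\<close> and \<open>b\<^sub>j = \<psi> c\<^sub>j\<close> for \<open>B - D = {r\<^sub>1, r\<^sub>2, r\<^sub>3}\<close> and \<open>D - B = {c\<^sub>1, c\<^sub>2, c\<^sub>3}\<close>.\<close>
lemma difference_table_impossible:
  fixes a1 a2 a3 b1 b2 b3 d :: "'g::ab_group_add"
  assumes diag: "b1 - a1 = d" "b2 - a2 = - d" "b3 - a3 = - d"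
    and order3: "d + d + d = 0" and double_nz: "d + d \<noteq> 0"
    and col2: "b2 - a1 = d \<or> b2 - a2 = d \<or> b2 - a3 = d"
    and col3: "b3 - a1 = d \<or> b3 - a2 = d \<or> b3 - a3 = d"
    and row2: "b1 - a2 = d \<or> b2 - a2 = d \<or> b3 - a2 = d"
    and row3: "b1 - a3 = d \<or> b2 - a3 = d \<or> b3 - a3 = d"
  shows False
proof -
  have a: "a1 = b1 - d" "a2 = b2 + d" "a3 = b3 + d" using diag by (simp_all add: algebra_simps)
  define u where "u = b2 - b1"
  define w where "w = b3 - b1"
  have b: "b2 = b1 + u" "b3 = b1 + w" by (simp_all add: u_def w_def)
  have "d \<noteq> 0" using double_nz by auto
  have neg_d: "- d = d + d" using order3 by (metis add.assoc neg_eq_iff_add_eq_0)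
  have "- d \<noteq> d" using double_nz neg_d \<open>d \<noteq> 0\<close> by (metis add_cancel_right_left)
  then have C2: "u = 0 \<or> u - w = d + d" and C3: "w = 0 \<or> w - u = d + d"
    and R2: "u = d \<or> w - u = d + d" and R3: "w = d \<or> u - w = d + d"
    using col2 col3 row2 row3 neg_d unfolding a b by (auto simp: algebra_simps)
  have neg_double: "- (d + d) = d" using order3 by (metis neg_eq_iff_add_eq_0)
  have "d + d \<noteq> d" using \<open>d \<noteq> 0\<close> by simp
  from C2 C3 consider "u = 0" "w = 0" | "u = 0" "w - u = d + d"
    | "u - w = d + d" "w = 0" | "u - w = d + d" "w - u = d + d" by blast
  then show False
  proof cases
    case 1
    then show ?thesis using R2 \<open>d \<noteq> 0\<close> double_nz by auto
  next
    case 2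
    then have "w = d + d" by simp
    then show ?thesis using R3 \<open>d + d \<noteq> d\<close> neg_double 2 by auto
  next
    case 3
    then have "u = d + d" by simp
    then show ?thesis using R2 \<open>d + d \<noteq> d\<close> neg_double 3 by auto
  next
    case 4
    have "w - u = - (u - w)" by simp
    then have "w - u = d" using 4 neg_double by simp
    then show ?thesis using 4 \<open>d + d \<noteq> d\<close> by simp
  qed
qed

definition near_bases_sum_in ::
    "('a set \<Rightarrow> bool) \<Rightarrow> ('a \<Rightarrow> 'g::comm_monoid_add) \<Rightarrow> 'g set \<Rightarrow> 'a set \<Rightarrow> nat \<Rightarrow> bool" where
  "near_bases_sum_in indep \<psi> F B k \<longleftrightarrow>
     (\<forall>D. basis indep D \<and> card (B - D) \<le> k \<longrightarrow> sum \<psi> D \<in> F)"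

lemma near_bases_sum_in_mono:
  "near_bases_sum_in indep \<psi> F B l \<Longrightarrow> k \<le> l \<Longrightarrow> near_bases_sum_in indep \<psi> F B k"
  unfolding near_bases_sum_in_def by auto

lemma near_bases_sum_in_exchange:
  assumes "finite B" "e \<in> B" and near: "near_bases_sum_in indep \<psi> F B (Suc k)"
  shows "near_bases_sum_in indep \<psi> F (insert y (B - {e})) k"
  unfolding near_bases_sum_in_def
proof (intro allI impI, elim conjE)
  fix D assume "basis indep D" and k: "card (insert y (B - {e}) - D) \<le> k"
  have fin: "finite (insert y (B - {e}) - D)" using \<open>finite B\<close> by simp
  have "card (B - D) \<le> card (insert e (insert y (B - {e}) - D))"
    using fin by (intro card_mono) auto
  also have "\<dots> \<le> Suc (card (insert y (B - {e}) - D))"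
    using fin by (simp add: card_insert_if)
  finally have "card (B - D) \<le> Suc (card (insert y (B - {e}) - D))" .
  with k near \<open>basis indep D\<close> show "sum \<psi> D \<in> F"
    unfolding near_bases_sum_in_def by auto
qed

context
  fixes E :: "'a set" and indep :: "'a set \<Rightarrow> bool"
    and \<psi> :: "'a \<Rightarrow> 'g::ab_group_add" and F :: "'g set" and B D :: "'a set"
  assumes M: "matroid E indep" and card_F: "card F = 2"
    and basis_B: "basis indep B" and near_B: "near_bases_sum_in indep \<psi> F B 2"
    and basis_D: "basis indep D" and card_B_D: "card (B - D) = 3"
begin

lemma finite_B: "finite B" and finite_D: "finite D"
  using basis_B basis_D matroid_indep_finite[OF M] unfolding basis_def by auto

lemma card_D_B: "card (D - B) = 3"
proof -
  have "card D = card B" using basis_iff_indep_card[OF M basis_B] basis_D by simp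
  then show ?thesis
    using card_B_D card_Diff_subset_Int[of B D] card_Diff_subset_Int[of D B] finite_B finite_D
    by (simp add: Int_commute)
qed

lemma sum_in_F_if_near: "basis indep D' \<Longrightarrow> card (B - D') \<le> 2 \<Longrightarrow> sum \<psi> D' \<in> F"
  using near_B unfolding near_bases_sum_in_def by blast

lemma sum_in_F_swap_into_B:
  assumes "r \<in> B - D" "c \<in> D - B" "basis indep (insert c (B - {r}))"
  shows "sum \<psi> B + (\<psi> c - \<psi> r) \<in> F"
proof -
  have "card (B - insert c (B - {r})) \<le> card {r}" by (rule card_mono) auto
  then show ?thesis
    using sum_in_F_if_near[OF assms(3)] sum_exchange[OF finite_B, of r c \<psi>] assms(1,2) by simp
qed

lemma sum_in_F_swap_into_D:
  assumes "r \<in> B - D" "c \<in> D - B" "basis indep (insert r (D - {c}))"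
  shows "sum \<psi> D - (\<psi> c - \<psi> r) \<in> F"
proof -
  have "B - insert r (D - {c}) = (B - D) - {r}" using assms(1,2) by auto
  then have "card (B - insert r (D - {c})) = 2" using card_B_D assms(1) finite_B by simp
  moreover have "sum \<psi> (insert r (D - {c})) = sum \<psi> D - (\<psi> c - \<psi> r)"
    using sum_exchange[OF finite_D, of c r \<psi>] assms(1,2) by (simp add: algebra_simps)
  ultimately show ?thesis using sum_in_F_if_near[OF assms(3)] by simp
qed

lemma F_eq_of_symmetric_swap:
  assumes far: "sum \<psi> D \<notin> F" and rc: "r \<in> B - D" "c \<in> D - B"
    and "basis indep (insert c (B - {r}))" "basis indep (insert r (D - {c}))"
  shows "F = {sum \<psi> B, sum \<psi> B + (\<psi> c - \<psi> r)}"
    and "sum \<psi> D = sum \<psi> B + (\<psi> c - \<psi> r) + (\<psi> c - \<psi> r)"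
proof -
  let ?f = "sum \<psi> B" and ?m = "\<psi> c - \<psi> r"
  have swap_D: "sum \<psi> D - ?m \<in> F" using sum_in_F_swap_into_D[OF rc] assms(5) by simp
  then have "?m \<noteq> 0" using far by auto
  then have "card {?f, ?f + ?m} = 2" by simp
  moreover have "{?f, ?f + ?m} \<subseteq> F"
    using sum_in_F_if_near[OF basis_B] sum_in_F_swap_into_B[OF rc] assms(4) by simp
  ultimately show F: "F = {?f, ?f + ?m}"
    using card_F card_seteq[of F "{?f, ?f + ?m}"] card_ge_0_finite[of F] by simp
  then have "sum \<psi> D - ?m = ?f + ?m" using swap_D far by (auto simp: algebra_simps)
  then show "sum \<psi> D = ?f + ?m + ?m" by (simp add: algebra_simps)
qed

context
  fixes d :: 'g
  assumes far: "sum \<psi> D \<notin> F" and F_eq: "F = {sum \<psi> B, sum \<psi> B + d}"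
    and sum_D: "sum \<psi> D = sum \<psi> B + d + d"
begin

lemma difference_double_nonzero: "d + d \<noteq> 0"
  using far sum_D F_eq by auto

lemma symmetric_swap_difference:
  assumes "r \<in> B - D" "c \<in> D - B"
    and "basis indep (insert c (B - {r}))" "basis indep (insert r (D - {c}))"
  shows "\<psi> c - \<psi> r = d"
proof -
  have F: "F = {sum \<psi> B, sum \<psi> B + (\<psi> c - \<psi> r)}"
    using F_eq_of_symmetric_swap(1)[OF far assms] .
  then have "\<psi> c - \<psi> r \<noteq> 0" using card_F by auto
  then show ?thesis using F F_eq by (metis add_cancel_left_right insert_iff singletonD add_left_cancel)
qed

lemma row_difference: "r \<in> B - D \<Longrightarrow> \<exists>c\<in>D - B. \<psi> c - \<psi> r = d"
  using basis_symmetric_exchange[OF M basis_B basis_D, of r] symmetric_swap_difference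
  by (metis DiffD1 DiffD2)

lemma column_difference: "c \<in> D - B \<Longrightarrow> \<exists>r\<in>B - D. \<psi> c - \<psi> r = d"
  using basis_symmetric_exchange[OF M basis_D basis_B, of c] symmetric_swap_difference
  by (metis DiffD1 DiffD2)

text \<open>The second swap is made in \<open>B\<^sub>1 = B - r\<^sub>1 + c\<^sub>1\<close>, so its result is still within distance 2
  of \<open>B\<close>, while \<open>\<psi>(B\<^sub>1) = \<psi>(B) + d\<close> shifts the constraint from \<open>F\<close>.\<close>
lemma second_swap_difference:
  assumes r1: "r1 \<in> B - D" "c1 \<in> D - B" "basis indep (insert c1 (B - {r1}))"
    "\<psi> c1 - \<psi> r1 = d"
    and r2: "r2 \<in> B - D" "r2 \<noteq> r1"
  obtains c2 where "c2 \<in> D - B" "c2 \<noteq> c1" "\<psi> c2 - \<psi> r2 = - d" and "d + d + d = 0"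
proof -
  let ?f = "sum \<psi> B"
  define B1 where "B1 = insert c1 (B - {r1})"
  have "r2 \<in> B1" "r2 \<notin> D" using r2 unfolding B1_def by auto
  then obtain c2 where c2: "c2 \<in> D - B1" "basis indep (insert c2 (B1 - {r2}))"
      "basis indep (insert r2 (D - {c2}))"
    using basis_symmetric_exchange[OF M r1(3)[folded B1_def] basis_D] by blast
  have c2': "c2 \<in> D - B" "c2 \<noteq> c1" using c2(1) r1(1) unfolding B1_def by auto
  have "sum \<psi> B1 = ?f + d"
    unfolding B1_def using sum_exchange[OF finite_B, of r1 c1 \<psi>] r1 by simp
  then have "sum \<psi> (insert c2 (B1 - {r2})) = ?f + d + (\<psi> c2 - \<psi> r2)"
    using sum_exchange[of B1 r2 c2 \<psi>] finite_B c2(1) \<open>r2 \<in> B1\<close> unfolding B1_def by simp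
  moreover have "card (B - insert c2 (B1 - {r2})) \<le> card {r1, r2}"
    unfolding B1_def by (rule card_mono) auto
  ultimately have "?f + d + (\<psi> c2 - \<psi> r2) \<in> F"
    using sum_in_F_if_near[OF c2(2)] r2(2) by simp
  then have in_F: "\<psi> c2 - \<psi> r2 = - d \<or> \<psi> c2 - \<psi> r2 = 0"
    unfolding F_eq by (auto simp: algebra_simps eq_neg_iff_add_eq_0)
  have back_in_F: "sum \<psi> D - (\<psi> c2 - \<psi> r2) \<in> F"
    using sum_in_F_swap_into_D[OF r2(1) c2'(1) c2(3)] .
  then have diff: "\<psi> c2 - \<psi> r2 = - d" using in_F far by auto
  then have "?f + d + d + d \<in> F" using back_in_F sum_D by simp
  then have "d + d + d = 0" using difference_double_nonzero unfolding F_eq by (auto simp: algebra_simps)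
  with c2' diff that show ?thesis by blast
qed

lemma distance_three_contradiction: False
proof -
  obtain r1 where r1: "r1 \<in> B - D" using card_B_D by (metis card.empty ex_in_conv zero_neq_numeral)
  then obtain c1 where c1: "c1 \<in> D - B" "basis indep (insert c1 (B - {r1}))"
      "basis indep (insert r1 (D - {c1}))"
    using basis_symmetric_exchange[OF M basis_B basis_D, of r1] by blast
  have d1: "\<psi> c1 - \<psi> r1 = d" using symmetric_swap_difference[OF r1 c1] .
  obtain r2 where r2: "r2 \<in> B - D" "r2 \<noteq> r1"
  proof -
    have "card (B - D - {r1}) = 2" using card_B_D r1 finite_B by simp
    then show ?thesis using that by (force simp: card_2_iff)
  qed
  obtain c2 where c2: "c2 \<in> D - B" "c2 \<noteq> c1" "\<psi> c2 - \<psi> r2 = - d" and order3: "d + d + d = 0"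
    using second_swap_difference[OF r1 c1(1,2) d1 r2] by blast
  obtain r3 where R: "B - D = {r1, r2, r3}" "r3 \<noteq> r1" "r3 \<noteq> r2"
    using card_eq_3_third_element[OF card_B_D r1 r2(1)] r2(2) by metis
  obtain c3 where C: "D - B = {c1, c2, c3}" "c3 \<noteq> c1" "c3 \<noteq> c2"
    using card_eq_3_third_element[OF card_D_B c1(1) c2(1)] c2(2) by metis
  have "d + d = sum \<psi> D - sum \<psi> B" using sum_D by (simp add: algebra_simps)
  also have "\<dots> = (\<psi> c1 - \<psi> r1) + (\<psi> c2 - \<psi> r2) + (\<psi> c3 - \<psi> r3)"
    using sum_diff_eq_sum_set_diffs[OF finite_B finite_D, of \<psi>] R C r2(2) c2(2)
    by (simp add: algebra_simps)
  finally have "\<psi> c3 - \<psi> r3 = d + d" using d1 c2(3) by simp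
  then have d3: "\<psi> c3 - \<psi> r3 = - d" using order3 by (metis add.assoc neg_eq_iff_add_eq_0)
  show False
    using difference_table_impossible[OF d1 c2(3) d3 order3 difference_double_nonzero]
      column_difference[of c2] column_difference[of c3] row_difference[of r2] row_difference[of r3]
    unfolding R(1) C(1) by blast
qed

end

lemma distance_three_sum_in_F: "sum \<psi> D \<in> F"
proof (rule ccontr)
  assume far: "sum \<psi> D \<notin> F"
  obtain r where r: "r \<in> B - D" using card_B_D by (metis card.empty ex_in_conv zero_neq_numeral)
  then obtain c where c: "c \<in> D - B" "basis indep (insert c (B - {r}))"
      "basis indep (insert r (D - {c}))"
    using basis_symmetric_exchange[OF M basis_B basis_D, of r] by blast
  show False
    using distance_three_contradiction[OF far F_eq_of_symmetric_swap[OF far r c]] .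
qed

end

lemma near_bases_sum_in_3:
  fixes \<psi> :: "'a \<Rightarrow> 'g::ab_group_add"
  assumes "matroid E indep" "card F = 2" "basis indep B" "near_bases_sum_in indep \<psi> F B 2"
  shows "near_bases_sum_in indep \<psi> F B 3"
  unfolding near_bases_sum_in_def
proof (intro allI impI, elim conjE)
  fix D assume D: "basis indep D" "card (B - D) \<le> 3"
  show "sum \<psi> D \<in> F"
  proof (cases "card (B - D) = 3")
    case True
    then show ?thesis using distance_three_sum_in_F[OF assms D(1)] by blast
  next
    case False
    then show ?thesis using assms(4) D unfolding near_bases_sum_in_def by auto
  qed
qed

text \<open>Any counterexample at distance \<open>n \<ge> 4\<close> from \<open>B\<close> is at distance \<open>n - 1\<close> from a basis
  \<open>B\<^sub>1\<close> adjacent to \<open>B\<close>, and \<open>B\<^sub>1\<close> inherits the hypothesis because its 2-neighbourhood lies in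
  the 3-neighbourhood of \<open>B\<close>.\<close>
lemma near_bases_sum_in_all:
  fixes \<psi> :: "'a \<Rightarrow> 'g::ab_group_add"
  assumes M: "matroid E indep" and card_F: "card F = 2"
  shows "basis indep B \<Longrightarrow> near_bases_sum_in indep \<psi> F B 2 \<Longrightarrow> near_bases_sum_in indep \<psi> F B n"
proof (induction n arbitrary: B)
  case 0
  then show ?case using near_bases_sum_in_mono by blast
next
  case (Suc n)
  show ?case
  proof (cases "n < 3")
    case True
    then show ?thesis
      using near_bases_sum_in_3[OF M card_F Suc.prems] near_bases_sum_in_mono by fastforce
  next
    case large: False
    have near_n: "near_bases_sum_in indep \<psi> F B n" using Suc.IH Suc.prems by blast
    show ?thesis unfolding near_bases_sum_in_def
    proof (intro allI impI, elim conjE)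
      fix D assume D: "basis indep D" "card (B - D) \<le> Suc n"
      show "sum \<psi> D \<in> F"
      proof (cases "card (B - D) \<le> n")
        case True
        then show ?thesis using near_n D(1) unfolding near_bases_sum_in_def by blast
      next
        case far: False
        then obtain e where e: "e \<in> B - D" by (metis card.empty ex_in_conv le0)
        then obtain y where y: "y \<in> D - B" "basis indep (insert y (B - {e}))"
          using basis_symmetric_exchange[OF M Suc.prems(1) D(1), of e] by blast
        have fin_B: "finite B"
          using Suc.prems(1) matroid_indep_finite[OF M] unfolding basis_def by blast
        have "near_bases_sum_in indep \<psi> F (insert y (B - {e})) (n - 1)"
          using near_bases_sum_in_exchange[OF fin_B, of e indep \<psi> F "n - 1"] near_n e large
          by (simp add: Suc_diff_1)
        then have "near_bases_sum_in indep \<psi> F (insert y (B - {e})) n"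
          using Suc.IH[OF y(2)] near_bases_sum_in_mono[of indep \<psi> F _ "n - 1" 2] large by simp
        moreover have "card (insert y (B - {e}) - D) = n"
          using D(2) far e y fin_B by (simp add: insert_Diff_if Diff_insert2[symmetric])
        ultimately show ?thesis using D(1) unfolding near_bases_sum_in_def by simp
      qed
    qed
  qed
qed

theorem theorem5p33:
  fixes E :: "'a set" and indep :: "'a set \<Rightarrow> bool"
    and \<psi> :: "'a \<Rightarrow> 'g::ab_group_add" and F :: "'g set"
  assumes "matroid E indep"
    and "card F = 2"
    and "\<exists>B. basis indep B \<and> F_avoiding \<psi> F B"
    and "basis indep B"
  shows "\<exists>B'. basis indep B' \<and> F_avoiding \<psi> F B' \<and> card (B - B') \<le> 2"
proof (rule ccontr)
  assume "\<not> ?thesis"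
  then have "near_bases_sum_in indep \<psi> F B 2"
    unfolding near_bases_sum_in_def F_avoiding_def by blast
  then have "near_bases_sum_in indep \<psi> F B n" for n
    using near_bases_sum_in_all[OF assms(1,2,4)] by blast
  moreover obtain B0 where "basis indep B0" "sum \<psi> B0 \<notin> F"
    using assms(3) unfolding F_avoiding_def by blast
  ultimately show False unfolding near_bases_sum_in_def by blast
qed

end
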